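(* Let $\gamma,\tau,m$ be integers with $\gamma\ge0$, $\tau\in\{0,1,\dots,\gamma\}$ and $m\ge2\gamma+1$. Then $$\overline{\mathfrak{C}}_{\gamma,\gamma,2\tau}=2\sqrt{\frac2\pi}\frac{(\tau+1)^2(\gamma-\tau+1)(\gamma+\tau+3)}{(\gamma+1)(\gamma+3)\sqrt{4\tau(\tau+2)+3}},\qquad \overline{\mathfrak{C}}_{m,2\tau,m}=2\sqrt{\frac2\pi}\frac{(\tau+1)^2(m-\tau+1)(m+\tau+3)}{(m+1)(m+3)\sqrt{4\tau(\tau+2)+3}},$$ $$\overline{\mathfrak{C}}_{\gamma,2\tau+m-\gamma,m}=2\sqrt{\frac2\pi}\frac{(\tau+1)(\gamma-\tau+1)(m+\tau+3)(-\gamma+m+\tau+1)}{\sqrt{(\gamma+1)(\gamma+3)(m+1)(m+3)(-\gamma+m+2\tau+1)(-\gamma+m+2\tau+3)}}.$$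
   Context: $\mathfrak{e}_n(x)=\mathfrak{N}_nP_n^{(3/2,3/2)}(\cos x)$ with $P_n^{(3/2,3/2)}$ the Jacobi polynomial and $\mathfrak{N}_n=\frac{\sqrt{(n+2)\Gamma(1+n)\Gamma(4+n)}}{2\sqrt2\,\Gamma(5/2+n)}$. $\overline{\mathfrak{C}}_{ijm}=\int_0^\pi\mathfrak{e}_i\mathfrak{e}_j\mathfrak{e}_m\sin^4x\,dx$. *)

theory Defs
  imports "HOL-Analysis.Analysis"
begin

definition jacobiP :: "nat \<Rightarrow> real \<Rightarrow> real \<Rightarrow> real \<Rightarrow> real" where
  "jacobiP n a b x =
     (\<Sum>s\<le>n. ((real n + a) gchoose (n - s)) * ((real n + b) gchoose s)
              * ((x - 1) / 2) ^ s * ((x + 1) / 2) ^ (n - s))"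

definition frakN :: "nat \<Rightarrow> real" where
  "frakN n = sqrt ((real n + 2) * Gamma (1 + real n) * Gamma (4 + real n))
             / (2 * sqrt 2 * Gamma (5/2 + real n))"

definition frake :: "nat \<Rightarrow> real \<Rightarrow> real" where
  "frake n x = frakN n * jacobiP n (3/2) (3/2) (cos x)"

definition Cbar :: "nat \<Rightarrow> nat \<Rightarrow> nat \<Rightarrow> real" where
  "Cbar i j m = integral {0..pi} (\<lambda>x. frake i x * frake j x * frake m x * sin x ^ 4)"

end

theory Submission
  imports Defs
begin

(* Up to a constant, e_n(t) is the Gegenbauer polynomial
   C_n^(2)(cos t) = sum_l (l+1)(n-l+1) cos((n-2l)t).  The link comes from differentiating in t
   the identity P_(n+1)^(1/2,1/2)(cos t) sin t = const * sin((n+2)t), which yields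
   4 sin^3 t C_n^(2)(cos t) = (n+3) sin((n+1)t) - (n+1) sin((n+3)t).
   Hence 4 sin^3 t C_i C_j is an explicit sine polynomial, while C_p(cos t) sin t is the sine
   series sum q sin(qt) over q = p+1, p-1, ... > 0.  By orthogonality of sines on [0, pi] the
   triple integral with p = i + j - 2k becomes a telescoping sum equal to
   pi/8 (k+1)(i-k+1)(j-k+1)(i+j-k+3); the three identities are instances of this closed form. *)

section \<open>Gegenbauer polynomials of index 2 in trigonometric form\<close>

definition gegenbauer2 :: "nat \<Rightarrow> real \<Rightarrow> real" where
  "gegenbauer2 n t = (\<Sum>l\<le>n. (real l + 1) * (real n - real l + 1) * cos ((real n - 2 * real l) * t))"

lemma cos_sum_mult_sin:
  "(\<Sum>l\<le>n. cos ((real n - 2 * real l) * t)) * sin t = sin ((real n + 1) * t)"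
proof -
  define f where "f l = - sin ((real n + 1 - 2 * real l) * t) / 2" for l :: nat
  have product: "cos x * sin t = - sin (x - t) / 2 - - sin (x + t) / 2" for x
    by (simp add: sin_add sin_diff field_simps)
  have step: "cos ((real n - 2 * real l) * t) * sin t = f (Suc l) - f l" for l
  proof -
    have "(real n + 1 - 2 * real (Suc l)) * t = (real n - 2 * real l) * t - t"
      and "(real n + 1 - 2 * real l) * t = (real n - 2 * real l) * t + t"
      by (simp_all add: algebra_simps)
    then show ?thesis
      unfolding f_def product by simp
  qed
  have "(\<Sum>l\<le>n. cos ((real n - 2 * real l) * t)) * sin t = (\<Sum>l<Suc n. f (Suc l) - f l)"
    by (simp add: sum_distrib_right step lessThan_Suc_atMost)
  also have "\<dots> = f (Suc n) - f 0"
    by (rule sum_lessThan_telescope)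
  also have "\<dots> = sin ((real n + 1) * t)"
  proof -
    have "(real n + 1 - 2 * real (Suc n)) * t = - ((real n + 1) * t)"
      by (simp add: algebra_simps)
    then show ?thesis
      unfolding f_def by simp
  qed
  finally show ?thesis .
qed

lemma gegenbauer2_Suc_Suc:
  "gegenbauer2 (Suc (Suc n)) t
     = gegenbauer2 n t + (real n + 3) * (\<Sum>l\<le>Suc (Suc n). cos ((real (Suc (Suc n)) - 2 * real l) * t))"
proof -
  define c where "c l = cos ((real n - 2 * real l) * t)" for l
  define a where "a l = (real l + 1) * (real n - real l + 1) * c l" for l
  have split: "(\<Sum>l\<le>Suc (Suc n). g l) = g 0 + (\<Sum>l\<le>n. g (Suc l)) + g (Suc (Suc n))"
    for g :: "nat \<Rightarrow> real"
    by (subst sum.atMost_Suc, subst sum.atMost_Suc_shift) simp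
  have freq: "cos ((real (Suc (Suc n)) - 2 * real (Suc l)) * t) = c l" for l
  proof -
    have "(real (Suc (Suc n)) - 2 * real (Suc l)) * t = (real n - 2 * real l) * t"
      by (simp add: algebra_simps)
    then show ?thesis
      unfolding c_def by simp
  qed
  have inner: "(real (Suc l) + 1) * (real (Suc (Suc n)) - real (Suc l) + 1) * c l = a l + (real n + 3) * c l" for l
    unfolding a_def by (simp add: algebra_simps)
  have ends: "cos ((real (Suc (Suc n)) - 2 * real (Suc (Suc n))) * t) = cos ((real n + 2) * t)"
    using cos_minus[of "(real n + 2) * t"] by (simp add: algebra_simps)
  have "gegenbauer2 n t = (\<Sum>l\<le>n. a l)"
    unfolding gegenbauer2_def a_def c_def ..
  then show ?thesis
    unfolding gegenbauer2_def[of "Suc (Suc n)"] split ends unfolding freq inner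
    by (simp add: sum.distrib sum_distrib_left algebra_simps)
qed

lemma gegenbauer2_Suc_Suc_mult_sin:
  "gegenbauer2 (Suc (Suc n)) t * sin t = gegenbauer2 n t * sin t + (real n + 3) * sin ((real n + 3) * t)"
proof -
  have "(real (Suc (Suc n)) + 1) * t = (real n + 3) * t"
    by (simp add: algebra_simps)
  then show ?thesis
    unfolding gegenbauer2_Suc_Suc distrib_right mult.assoc cos_sum_mult_sin by (simp only:)
qed

lemma gegenbauer2_mult_sin_cube:
  "4 * sin t ^ 3 * gegenbauer2 n t = (real n + 3) * sin ((real n + 1) * t) - (real n + 1) * sin ((real n + 3) * t)"
proof (induction n rule: nat_induct2)
  case 0
  have "sin (3 * t) = sin (2 * t + t)"
    by simp
  also have "\<dots> = 3 * sin t - 4 * sin t ^ 3"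
    unfolding sin_add sin_double cos_double_sin using sin_cos_squared_add[of t] by algebra
  finally have "sin (3 * t) = 3 * sin t - 4 * sin t ^ 3" .
  then show ?case
    by (simp add: gegenbauer2_def)
next
  case 1
  have "sin (4 * t) = 2 * sin (2 * t) * cos (2 * t)"
    using sin_double[of "2 * t"] by simp
  then have "4 * sin (2 * t) - 2 * sin (4 * t) = 16 * sin t ^ 3 * cos t"
    unfolding sin_double cos_double_sin by (simp add: algebra_simps power2_eq_square power3_eq_cube)
  then show ?case
    by (simp add: gegenbauer2_def)
next
  case (step n)
  let ?x = "(real n + 3) * t"
  have trig: "(real n + 5) * sin x - (real n + 3) * sin (x + 2 * t)
      = (real n + 3) * sin (x - 2 * t) - (real n + 1) * sin x + 4 * (real n + 3) * sin x * sin t ^ 2" for x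
    unfolding sin_add sin_diff cos_double_sin by (simp add: algebra_simps)
  have "4 * sin t ^ 3 * gegenbauer2 (Suc (Suc n)) t = 4 * sin t ^ 2 * (gegenbauer2 (Suc (Suc n)) t * sin t)"
    by (simp add: power2_eq_square power3_eq_cube)
  also have "\<dots> = 4 * sin t ^ 3 * gegenbauer2 n t + 4 * (real n + 3) * sin ?x * sin t ^ 2"
    unfolding gegenbauer2_Suc_Suc_mult_sin by (simp add: algebra_simps power2_eq_square power3_eq_cube)
  also have "\<dots> = (real n + 3) * sin (?x - 2 * t) - (real n + 1) * sin ?x + 4 * (real n + 3) * sin ?x * sin t ^ 2"
    unfolding step.IH by (simp add: algebra_simps)
  also have "\<dots> = (real n + 5) * sin ?x - (real n + 3) * sin (?x + 2 * t)"
    by (rule trig[symmetric])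
  finally show ?case
    by (simp add: algebra_simps)
qed

section \<open>Jacobi polynomials with parameters 1/2 and 3/2\<close>

lemma fact_mult_Gamma_half:
  "fact k * Gamma (real k + 3/2) = fact (2 * k + 1) * sqrt pi / 2 ^ (2 * k + 1)"
proof (induction k)
  case 0
  have "Gamma (1/2 + 1 :: real) = 1/2 * Gamma (1/2)"
    by (rule Gamma_plus1) (auto dest: nonpos_Ints_nonpos)
  then show ?case
    by (simp add: Gamma_one_half_real)
next
  case (Suc k)
  have "real k + 3/2 \<notin> \<int>\<^sub>\<le>\<^sub>0"
    by (auto dest: nonpos_Ints_nonpos)
  then have "Gamma (real (Suc k) + 3/2) = (real k + 3/2) * Gamma (real k + 3/2)"
    using Gamma_plus1[of "real k + 3/2"] by (simp add: add_ac)
  then have "fact (Suc k) * Gamma (real (Suc k) + 3/2) = (real k + 1) * (real k + 3/2) * (fact k * Gamma (real k + 3/2))"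
    by (simp add: algebra_simps)
  also have "\<dots> = fact (2 * Suc k + 1) * sqrt pi / 2 ^ (2 * Suc k + 1)"
    unfolding Suc.IH by (simp add: field_simps)
  finally show ?case .
qed

lemma gbinomial_half_integer_product:
  assumes "s \<le> N"
  shows "((real N + 1/2) gchoose (N - s)) * ((real N + 1/2) gchoose s)
           = Gamma (real N + 3/2) / (sqrt pi * fact (N + 1)) * real ((2 * N + 2) choose (2 * s + 1))"
proof -
  define r where "r = N - s"
  define g where "g = Gamma (real N + 3/2)"
  have N: "N = r + s" and "r \<le> N" "N - r = s"
    using assms unfolding r_def by simp_all
  have gbinomial: "((real N + 1/2) gchoose m) = g / (fact m * Gamma (real (N - m) + 3/2))" if "m \<le> N" for m
  proof -
    have "real N + 1/2 + 1 \<notin> \<int>\<^sub>\<le>\<^sub>0"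
      by (auto dest: nonpos_Ints_nonpos)
    from gbinomial_Gamma[OF this, of m]
    have "((real N + 1/2) gchoose m) = Gamma (real N + 1/2 + 1) / (fact m * Gamma (real N + 1/2 - real m + 1))" .
    moreover have "real N + 1/2 + 1 = real N + 3/2" "real N + 1/2 - real m + 1 = real (N - m) + 3/2"
      using that by (simp_all add: of_nat_diff)
    ultimately show ?thesis
      unfolding g_def by (simp only:)
  qed
  have g: "g = fact (2 * N + 2) * sqrt pi / (2 ^ (2 * N + 2) * fact (N + 1))"
  proof -
    have "fact (N + 1) * g = (real N + 1) * (fact N * g)"
      by (simp add: algebra_simps)
    also have "\<dots> = fact (2 * N + 2) * sqrt pi / 2 ^ (2 * N + 2)"
      unfolding g_def fact_mult_Gamma_half by (simp add: field_simps)
    finally show ?thesis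
      by (simp add: field_simps del: fact_Suc)
  qed
  have "((real N + 1/2) gchoose r) * ((real N + 1/2) gchoose s)
      = g * g / ((fact r * Gamma (real r + 3/2)) * (fact s * Gamma (real s + 3/2)))"
    unfolding gbinomial[OF \<open>r \<le> N\<close>] gbinomial[OF assms] \<open>N - r = s\<close> r_def[symmetric] by simp
  also have "\<dots> = g * g * 2 ^ (2 * N + 2) / (fact (2 * r + 1) * fact (2 * s + 1) * (sqrt pi * sqrt pi))"
    unfolding fact_mult_Gamma_half N by (simp add: field_simps power_add del: fact_Suc real_sqrt_mult_self)
  also have "\<dots> = g / (sqrt pi * fact (N + 1)) * (fact (2 * N + 2) / (fact (2 * s + 1) * fact (2 * r + 1)))"
    by (subst (2) g) (simp add: field_simps del: fact_Suc real_sqrt_mult_self)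
  also have "fact (2 * N + 2) / (fact (2 * s + 1) * fact (2 * r + 1)) = real ((2 * N + 2) choose (2 * s + 1))"
    using binomial_fact[of "2 * s + 1" "2 * N + 2", where 'a = real] N by (simp add: algebra_simps)
  finally show ?thesis
    unfolding g_def r_def .
qed

lemma sum_lessThan_twice:
  fixes g :: "nat \<Rightarrow> 'a::comm_monoid_add"
  shows "(\<Sum>k<2 * n. g k) = (\<Sum>s<n. g (2 * s) + g (2 * s + 1))"
  by (induction n) (simp_all add: algebra_simps)

lemma sin_mult_binomial_expansion:
  "sin (real n * x) = (\<Sum>k\<le>n. real (n choose k) * sin x ^ k * cos x ^ (n - k) * Im (\<i> ^ k))"
proof -
  have "cis x = \<i> * complex_of_real (sin x) + complex_of_real (cos x)"
    by (simp add: complex_eq_iff)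
  then have "cis x ^ n = (\<Sum>k\<le>n. of_nat (n choose k) * (\<i> * complex_of_real (sin x)) ^ k * complex_of_real (cos x) ^ (n - k))"
    by (simp add: binomial_ring)
  also have "\<dots> = (\<Sum>k\<le>n. complex_of_real (real (n choose k) * sin x ^ k * cos x ^ (n - k)) * \<i> ^ k)"
    by (simp add: power_mult_distrib algebra_simps)
  finally show ?thesis
    by (simp add: sin_n_Im_cis_pow_n)
qed

lemma sin_even_mult_expansion:
  "sin (real (2 * N + 2) * x)
     = (\<Sum>s\<le>N. real ((2 * N + 2) choose (2 * s + 1)) * (-1) ^ s * sin x ^ (2 * s + 1) * cos x ^ (2 * N + 1 - 2 * s))"
proof -
  let ?g = "\<lambda>k. real ((2 * N + 2) choose k) * sin x ^ k * cos x ^ (2 * N + 2 - k) * Im (\<i> ^ k)"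
  have "{..2 * N + 2} = insert (2 * (N + 1)) {..<2 * (N + 1)}"
    by auto
  moreover have "Im (\<i> ^ (2 * (N + 1))) = 0"
    by (simp add: power_mult)
  ultimately have "sin (real (2 * N + 2) * x) = (\<Sum>k<2 * (N + 1). ?g k)"
    unfolding sin_mult_binomial_expansion by simp
  also have "\<dots> = (\<Sum>s<N + 1. real ((2 * N + 2) choose (2 * s + 1)) * sin x ^ (2 * s + 1) * cos x ^ (2 * N + 2 - (2 * s + 1)) * (-1) ^ s)"
    unfolding sum_lessThan_twice by (simp add: power_mult power_add)
  also have "\<dots> = (\<Sum>s\<le>N. real ((2 * N + 2) choose (2 * s + 1)) * (-1) ^ s * sin x ^ (2 * s + 1) * cos x ^ (2 * N + 1 - 2 * s))"
    by (rule sum.cong) (auto simp: algebra_simps)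
  finally show ?thesis .
qed

lemma jacobiP_half_summand_cos_double:
  assumes "s \<le> N"
  shows "((real N + 1/2) gchoose (N - s)) * ((real N + 1/2) gchoose s)
           * ((cos (2 * x) - 1) / 2) ^ s * ((cos (2 * x) + 1) / 2) ^ (N - s) * sin (2 * x)
         = 2 * (Gamma (real N + 3/2) / (sqrt pi * fact (N + 1)))
           * (real ((2 * N + 2) choose (2 * s + 1)) * (-1) ^ s * sin x ^ (2 * s + 1) * cos x ^ (2 * N + 1 - 2 * s))"
proof -
  have halves: "(cos (2 * x) - 1) / 2 = - (sin x ^ 2)" "(cos (2 * x) + 1) / 2 = cos x ^ 2"
    unfolding cos_double_sin[of x] by (simp_all add: cos_squared_eq)
  have "((real N + 1/2) gchoose (N - s)) * ((real N + 1/2) gchoose s)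
          * ((cos (2 * x) - 1) / 2) ^ s * ((cos (2 * x) + 1) / 2) ^ (N - s) * sin (2 * x)
      = 2 * (((real N + 1/2) gchoose (N - s)) * ((real N + 1/2) gchoose s))
          * (((- (sin x ^ 2)) ^ s * sin x) * ((cos x ^ 2) ^ (N - s) * cos x))"
    unfolding halves sin_double by (simp only: mult_ac)
  also have "(- (sin x ^ 2)) ^ s * sin x = (-1) ^ s * sin x ^ (2 * s + 1)"
    by (simp add: power_mult_distrib[symmetric] power_mult power_add)
  also have "(cos x ^ 2) ^ (N - s) * cos x = cos x ^ (2 * N + 1 - 2 * s)"
    using assms by (simp add: power_mult[symmetric] power_Suc2[symmetric] Suc_diff_le diff_mult_distrib2)
  finally show ?thesis
    unfolding gbinomial_half_integer_product[OF assms] by (simp only: mult_ac)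
qed

lemma jacobiP_half_cos:
  "jacobiP N (1/2) (1/2) (cos t) * sin t
     = 2 * Gamma (real N + 3/2) / (sqrt pi * fact (N + 1)) * sin ((real N + 1) * t)"
proof -
  define x where "x = t / 2"
  have t: "t = 2 * x"
    unfolding x_def by simp
  have "jacobiP N (1/2) (1/2) (cos t) * sin t
      = (\<Sum>s\<le>N. ((real N + 1/2) gchoose (N - s)) * ((real N + 1/2) gchoose s)
                  * ((cos (2 * x) - 1) / 2) ^ s * ((cos (2 * x) + 1) / 2) ^ (N - s) * sin (2 * x))"
    unfolding jacobiP_def sum_distrib_right t ..
  also have "\<dots> = 2 * (Gamma (real N + 3/2) / (sqrt pi * fact (N + 1))) * sin (real (2 * N + 2) * x)"
    unfolding sin_even_mult_expansion sum_distrib_left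
    by (rule sum.cong) (simp_all add: jacobiP_half_summand_cos_double)
  also have "real (2 * N + 2) * x = (real N + 1) * t"
    unfolding x_def by (simp add: algebra_simps)
  finally show ?thesis
    by simp
qed

lemma gbinomial_Suc_mult: "of_nat (Suc k) * (a gchoose Suc k) = (a - of_nat k) * (a gchoose k)"
  using gbinomial_absorption[of k a] gbinomial_absorb_comp[of a k] by simp

lemma gbinomial_product_Suc:
  fixes A B :: "'a::field_char_0"
  shows "(A gchoose k) * (B gchoose Suc s) * of_nat (Suc s) + (A gchoose Suc k) * (B gchoose s) * of_nat (Suc k)
           = (A + B - of_nat (k + s)) * (A gchoose k) * (B gchoose s)"
proof -
  have "(A gchoose k) * (B gchoose Suc s) * of_nat (Suc s) + (A gchoose Suc k) * (B gchoose s) * of_nat (Suc k)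
      = (A gchoose k) * (of_nat (Suc s) * (B gchoose Suc s)) + (of_nat (Suc k) * (A gchoose Suc k)) * (B gchoose s)"
    by (simp only: mult_ac)
  also have "\<dots> = (A gchoose k) * ((B - of_nat s) * (B gchoose s)) + ((A - of_nat k) * (A gchoose k)) * (B gchoose s)"
    unfolding gbinomial_Suc_mult ..
  also have "\<dots> = (A + B - of_nat (k + s)) * (A gchoose k) * (B gchoose s)"
    by (simp add: algebra_simps)
  finally show ?thesis .
qed

lemma has_real_derivative_jacobi_basis_sum:
  fixes \<alpha> :: "nat \<Rightarrow> real"
  shows "((\<lambda>y. \<Sum>s\<le>Suc n. \<alpha> s * ((y - 1) / 2) ^ s * ((y + 1) / 2) ^ (Suc n - s)) has_real_derivative
           (\<Sum>s\<le>n. (\<alpha> (Suc s) * real (Suc s) + \<alpha> s * real (Suc n - s)) * ((x - 1) / 2) ^ s * ((x + 1) / 2) ^ (n - s)) / 2)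
         (at x)"
proof -
  define u where "u = (x - 1) / 2"
  define v where "v = (x + 1) / 2"
  define D where "D s = \<alpha> s * (real s * u ^ (s - 1) * (1/2) * v ^ (Suc n - s)
                                 + u ^ s * (real (Suc n - s) * v ^ (Suc n - s - 1) * (1/2)))" for s
  have "((\<lambda>y. \<alpha> s * ((y - 1) / 2) ^ s * ((y + 1) / 2) ^ (Suc n - s)) has_real_derivative D s) (at x)" for s
    unfolding D_def u_def v_def by (auto intro!: derivative_eq_intros simp: algebra_simps)
  then have derivative: "((\<lambda>y. \<Sum>s\<le>Suc n. \<alpha> s * ((y - 1) / 2) ^ s * ((y + 1) / 2) ^ (Suc n - s))
      has_real_derivative (\<Sum>s\<le>Suc n. D s)) (at x)"
    by (rule DERIV_sum)
  have lower: "(\<Sum>s\<le>Suc n. \<alpha> s * (real s * u ^ (s - 1) * (1/2) * v ^ (Suc n - s)))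
      = (\<Sum>s\<le>n. \<alpha> (Suc s) * real (Suc s) * u ^ s * v ^ (n - s)) / 2"
    by (subst sum.atMost_Suc_shift) (simp add: sum_divide_distrib algebra_simps add_divide_distrib)
  have upper: "(\<Sum>s\<le>Suc n. \<alpha> s * (u ^ s * (real (Suc n - s) * v ^ (Suc n - s - 1) * (1/2))))
      = (\<Sum>s\<le>n. \<alpha> s * real (Suc n - s) * u ^ s * v ^ (n - s)) / 2"
    by (subst sum.atMost_Suc) (simp add: sum_divide_distrib algebra_simps Suc_diff_le add_divide_distrib diff_divide_distrib)
  have D_sum: "(\<Sum>s\<le>Suc n. D s) = (\<Sum>s\<le>n. (\<alpha> (Suc s) * real (Suc s) + \<alpha> s * real (Suc n - s)) * u ^ s * v ^ (n - s)) / 2"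
    unfolding D_def distrib_left sum.distrib lower upper
    by (simp add: sum.distrib[symmetric] algebra_simps add_divide_distrib)
  show ?thesis
    using derivative unfolding D_sum u_def v_def .
qed

lemma jacobiP_has_real_derivative:
  "((\<lambda>x. jacobiP (Suc n) a b x) has_real_derivative (real n + a + b + 2) / 2 * jacobiP n (a + 1) (b + 1) x) (at x)"
proof -
  define A where "A = real n + (a + 1)"
  define B where "B = real n + (b + 1)"
  define \<alpha> where "\<alpha> s = (A gchoose (Suc n - s)) * (B gchoose s)" for s
  have coefficient: "\<alpha> (Suc s) * real (Suc s) + \<alpha> s * real (Suc n - s)
      = (real n + a + b + 2) * (A gchoose (n - s)) * (B gchoose s)" if "s \<le> n" for s
  proof -
    have "Suc n - Suc s = n - s" "Suc n - s = Suc (n - s)"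
      using that by simp_all
    then have "\<alpha> (Suc s) * real (Suc s) + \<alpha> s * real (Suc n - s)
        = (A gchoose (n - s)) * (B gchoose Suc s) * of_nat (Suc s) + (A gchoose Suc (n - s)) * (B gchoose s) * of_nat (Suc (n - s))"
      unfolding \<alpha>_def by (simp add: algebra_simps)
    also have "\<dots> = (real n + a + b + 2) * (A gchoose (n - s)) * (B gchoose s)"
      unfolding gbinomial_product_Suc using that by (simp add: A_def B_def of_nat_diff)
    finally show ?thesis .
  qed
  have "jacobiP (Suc n) a b = (\<lambda>y. \<Sum>s\<le>Suc n. \<alpha> s * ((y - 1) / 2) ^ s * ((y + 1) / 2) ^ (Suc n - s))"
    unfolding jacobiP_def \<alpha>_def A_def B_def by (simp add: add_ac)
  moreover have "(\<Sum>s\<le>n. (\<alpha> (Suc s) * real (Suc s) + \<alpha> s * real (Suc n - s)) * ((x - 1) / 2) ^ s * ((x + 1) / 2) ^ (n - s))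
      = (\<Sum>s\<le>n. (real n + a + b + 2) * ((A gchoose (n - s)) * (B gchoose s) * ((x - 1) / 2) ^ s * ((x + 1) / 2) ^ (n - s)))"
    by (intro sum.cong refl) (simp only: atMost_iff coefficient mult.assoc)
  ultimately show ?thesis
    using has_real_derivative_jacobi_basis_sum[of \<alpha> n x]
    unfolding jacobiP_def A_def B_def sum_distrib_left[symmetric] by (simp add: field_simps)
qed

lemma sin_mult_cos_diff:
  fixes m t :: real
  shows "2 * (sin (m * t) * cos t - m * cos (m * t) * sin t) = (m + 1) * sin ((m - 1) * t) - (m - 1) * sin ((m + 1) * t)"
proof -
  have shifts: "(m - 1) * t = m * t - t" "(m + 1) * t = m * t + t"
    by (simp_all add: algebra_simps)
  show ?thesis
    unfolding shifts sin_add sin_diff by (simp add: algebra_simps)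
qed

lemma jacobiP_three_halves_cos_from_derivative:
  "(real n + 3) / 2 * (jacobiP n (3/2) (3/2) (cos t) * sin t ^ 3)
     = Gamma (real n + 5/2) / (sqrt pi * fact (n + 2))
         * (2 * (sin ((real n + 2) * t) * cos t - (real n + 2) * cos ((real n + 2) * t) * sin t))"
proof -
  define \<beta> where "\<beta> = Gamma (real n + 5/2) / (sqrt pi * fact (n + 2))"
  define g where "g = jacobiP (Suc n) (1/2) (1/2)"
  define J where "J = jacobiP n (3/2) (3/2)"
  have g_deriv: "(g has_real_derivative (real n + 3) / 2 * J x) (at x)" for x
  proof -
    have "(real n + 1/2 + 1/2 + 2) / 2 = (real n + 3) / 2" "(1/2 + 1 :: real) = 3/2"
      by simp_all
    then show ?thesis
      using jacobiP_has_real_derivative[of n "1/2" "1/2" x] unfolding g_def J_def by (simp add: algebra_simps)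
  qed
  have identity: "(\<lambda>s. g (cos s) * sin s) = (\<lambda>s. 2 * \<beta> * sin ((real n + 2) * s))"
  proof
    fix s
    have "real (Suc n) + 3/2 = real n + 5/2" "Suc n + 1 = n + 2" "real (Suc n) + 1 = real n + 2"
      by simp_all
    then show "g (cos s) * sin s = 2 * \<beta> * sin ((real n + 2) * s)"
      using jacobiP_half_cos[of "Suc n" s] unfolding g_def \<beta>_def by (simp only: mult.assoc)
  qed
  have "((\<lambda>s. g (cos s) * sin s) has_real_derivative
      (real n + 3) / 2 * J (cos t) * - sin t * sin t + cos t * g (cos t)) (at t)"
    by (rule DERIV_mult[OF DERIV_chain2[OF g_deriv DERIV_cos] DERIV_sin])
  moreover have "((\<lambda>s. 2 * \<beta> * sin ((real n + 2) * s)) has_real_derivative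
      2 * \<beta> * (cos ((real n + 2) * t) * (real n + 2))) (at t)"
    by (auto intro!: derivative_eq_intros)
  ultimately have derivatives: "(real n + 3) / 2 * J (cos t) * - sin t * sin t + cos t * g (cos t)
      = 2 * \<beta> * (cos ((real n + 2) * t) * (real n + 2))"
    unfolding identity by (rule DERIV_unique)
  have "(real n + 3) / 2 * (J (cos t) * sin t ^ 3)
      = cos t * (g (cos t) * sin t) - ((real n + 3) / 2 * J (cos t) * - sin t * sin t + cos t * g (cos t)) * sin t"
    by (simp add: field_simps power3_eq_cube)
  also have "\<dots> = \<beta> * (2 * (sin ((real n + 2) * t) * cos t - (real n + 2) * cos ((real n + 2) * t) * sin t))"
    unfolding derivatives fun_cong[OF identity] by (simp add: algebra_simps)
  finally show ?thesis
    unfolding J_def \<beta>_def .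
qed

lemma jacobiP_three_halves_cos:
  "jacobiP n (3/2) (3/2) (cos t) * sin t ^ 3
     = 2 * Gamma (real n + 5/2) / (sqrt pi * fact (n + 3))
         * ((real n + 3) * sin ((real n + 1) * t) - (real n + 1) * sin ((real n + 3) * t))"
proof -
  define \<beta> where "\<beta> = Gamma (real n + 5/2) / (sqrt pi * fact (n + 2))"
  have "real n + 2 + 1 = real n + 3" "real n + 2 - 1 = real n + 1"
    by simp_all
  with jacobiP_three_halves_cos_from_derivative[of n t, folded \<beta>_def] sin_mult_cos_diff[of "real n + 2" t]
  have "(real n + 3) / 2 * (jacobiP n (3/2) (3/2) (cos t) * sin t ^ 3)
      = \<beta> * ((real n + 3) * sin ((real n + 1) * t) - (real n + 1) * sin ((real n + 3) * t))"
    by (simp only:)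
  then have "jacobiP n (3/2) (3/2) (cos t) * sin t ^ 3
      = 2 * \<beta> / (real n + 3) * ((real n + 3) * sin ((real n + 1) * t) - (real n + 1) * sin ((real n + 3) * t))"
    by (simp add: field_simps)
  moreover have "fact (n + 3) = (real n + 3) * (fact (n + 2) :: real)"
    by (simp add: numeral_eq_Suc algebra_simps)
  ultimately show ?thesis
    unfolding \<beta>_def by simp
qed

lemma jacobiP_three_halves_eq_gegenbauer2:
  assumes "sin t \<noteq> 0"
  shows "jacobiP n (3/2) (3/2) (cos t) = 8 * Gamma (real n + 5/2) / (sqrt pi * fact (n + 3)) * gegenbauer2 n t"
proof -
  have "jacobiP n (3/2) (3/2) (cos t) * sin t ^ 3 = 8 * Gamma (real n + 5/2) / (sqrt pi * fact (n + 3)) * gegenbauer2 n t * sin t ^ 3"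
    unfolding jacobiP_three_halves_cos gegenbauer2_mult_sin_cube[symmetric] by (simp add: algebra_simps)
  moreover have "sin t ^ 3 \<noteq> 0"
    using assms by simp
  ultimately show ?thesis
    by (metis mult_right_cancel)
qed

lemma frakN_mult_jacobi_constant:
  "frakN n * (8 * Gamma (real n + 5/2) / (sqrt pi * fact (n + 3)))
     = 2 * sqrt (2 / pi) / sqrt ((real n + 1) * (real n + 3))"
proof -
  define q where "q = sqrt ((real n + 1) * (real n + 3))"
  define G where "G = Gamma (real n + 5/2)"
  have fact3: "fact (n + 3) = (real n + 3) * (real n + 2) * (real n + 1) * (fact n :: real)"
    by (simp add: numeral_eq_Suc algebra_simps)
  have "Gamma (1 + real n) = fact n" "Gamma (4 + real n) = fact (n + 3)"
    using Gamma_fact[of n, where 'a = real] Gamma_fact[of "n + 3", where 'a = real] by (simp_all add: add_ac)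
  moreover have "(real n + 2) * fact n * fact (n + 3) = (fact n * (real n + 2)) ^ 2 * ((real n + 1) * (real n + 3))"
    unfolding fact3 by (simp add: power2_eq_square algebra_simps)
  moreover have "Gamma (5/2 + real n) = G"
    unfolding G_def by (simp add: add.commute)
  ultimately have frakN_eq: "frakN n = fact n * (real n + 2) * q / (2 * sqrt 2 * G)"
    unfolding frakN_def q_def by (simp add: real_sqrt_mult)
  have q: "q * q = (real n + 1) * (real n + 3)" "q > 0" and "G > 0"
    unfolding q_def G_def by (simp_all add: Gamma_real_pos)
  moreover have "F * b * q / (2 * r * G) * (8 * G / (p * (c * b * a * F))) = 4 * q / (r * p * (a * c))"
    if "F > 0" "b > 0" "G > 0" "a > 0" "c > 0" "r > 0" "p > 0" for F b q G a c r p :: real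
    using that by (simp add: field_simps)
  ultimately have "frakN n * (8 * G / (sqrt pi * fact (n + 3))) = 4 * q / (sqrt 2 * sqrt pi * (q * q))"
    unfolding frakN_eq fact3 q(1) by simp
  also have "\<dots> = 2 * (sqrt 2 / sqrt pi) / q"
    using q(2) by (simp add: field_simps)
  finally show ?thesis
    unfolding G_def q_def by (simp add: real_sqrt_divide)
qed

lemma frake_eq_gegenbauer2:
  assumes "sin t \<noteq> 0"
  shows "frake n t = 2 * sqrt (2 / pi) / sqrt ((real n + 1) * (real n + 3)) * gegenbauer2 n t"
  unfolding frake_def jacobiP_three_halves_eq_gegenbauer2[OF assms] frakN_mult_jacobi_constant[symmetric]
  by (simp only: mult.assoc)

section \<open>Integrals over [0, pi]\<close>

lemma has_integral_cos_int_mult: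
  fixes c :: int
  shows "((\<lambda>t. cos (of_int c * t)) has_integral (if c = 0 then pi else 0)) {0..pi}"
proof (cases "c = 0")
  case True
  then show ?thesis
    using has_integral_const_real[of "1::real" 0 pi] by simp
next
  case False
  have "((\<lambda>t. sin (of_int c * t) / of_int c) has_real_derivative cos (of_int c * t)) (at t within {0..pi})" for t
    using False by (auto intro!: derivative_eq_intros)
  then have "((\<lambda>t. cos (of_int c * t)) has_integral sin (of_int c * pi) / of_int c - sin (of_int c * 0) / of_int c) {0..pi}"
    by (intro fundamental_theorem_of_calculus) (auto simp: has_real_derivative_iff_has_vector_derivative)
  moreover have "sin (of_int c * pi) = 0"
    by (simp add: sin_zero_iff_int2)
  ultimately show ?thesis
    using False by simp
qed

lemma has_integral_sin_mult_sin:
  fixes a b :: int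
  assumes "0 < a" "0 < b"
  shows "((\<lambda>t. sin (of_int a * t) * sin (of_int b * t)) has_integral (if a = b then pi / 2 else 0)) {0..pi}"
proof -
  have "sin (of_int a * t) * sin (of_int b * t) = cos (of_int (a - b) * t) / 2 - cos (of_int (a + b) * t) / 2" for t :: real
    by (simp add: sin_times_sin algebra_simps diff_divide_distrib)
  moreover have "((\<lambda>t. cos (of_int (a - b) * t) / 2 - cos (of_int (a + b) * t) / 2)
      has_integral (if a = b then pi / 2 else 0)) {0..pi}"
    using has_integral_diff[OF has_integral_divide[OF has_integral_cos_int_mult[of "a - b"]]
                               has_integral_divide[OF has_integral_cos_int_mult[of "a + b"]], of 2 2] assms
    by (cases "a = b") simp_all
  ultimately show ?thesis
    by simp
qed

lemma has_integral_sin_shift_mult_sin: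
  fixes d :: int
  assumes "2 * d < int q" "0 < q"
  shows "((\<lambda>t. sin ((real q - 2 * of_int d) * t) * sin (real q * t)) has_integral (if d = 0 then pi / 2 else 0)) {0..pi}"
  using has_integral_sin_mult_sin[of "int q - 2 * d" "int q"] assms by simp

(* Writing the frequency as p + 1 - 2 d makes the parity condition on the sine
   coefficients of gegenbauer2 p t * sin t disappear. *)
lemma has_integral_sin_mult_gegenbauer2:
  fixes d :: int
  assumes "2 * d < int p + 1"
  shows "((\<lambda>t. sin ((real p + 1 - 2 * of_int d) * t) * (gegenbauer2 p t * sin t))
           has_integral (if 0 \<le> d then pi / 2 * (real p + 1 - 2 * of_int d) else 0)) {0..pi}"
  using assms
proof (induction p arbitrary: d rule: nat_induct2)
  case 0
  then show ?case
    using has_integral_sin_shift_mult_sin[of d 1] by (cases "d = 0") (simp_all add: gegenbauer2_def)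
next
  case 1
  have "gegenbauer2 1 t * sin t = 2 * sin (real 2 * t)" for t
    by (simp add: gegenbauer2_def sin_double)
  then show ?case
    using has_integral_mult_right[OF has_integral_sin_shift_mult_sin[of d 2], of 2] 1
    by (cases "d = 0") (simp_all add: mult_ac)
next
  case (step n)
  have "2 * (d - 1) < int n + 1"
    using step.prems by simp
  from has_integral_add[OF step.IH[OF this]
      has_integral_mult_right[OF has_integral_sin_shift_mult_sin[of d "n + 3"], of "real n + 3"]]
  have "((\<lambda>t. sin ((real n + 1 - 2 * of_int (d - 1)) * t) * (gegenbauer2 n t * sin t)
          + (real n + 3) * (sin ((real (n + 3) - 2 * of_int d) * t) * sin (real (n + 3) * t)))
      has_integral (if 0 \<le> d - 1 then pi / 2 * (real n + 1 - 2 * of_int (d - 1)) else 0)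
                   + (real n + 3) * (if d = 0 then pi / 2 else 0)) {0..pi}"
    using step.prems by simp
  moreover have "sin ((real n + 1 - 2 * of_int (d - 1)) * t) * (gegenbauer2 n t * sin t)
        + (real n + 3) * (sin ((real (n + 3) - 2 * of_int d) * t) * sin (real (n + 3) * t))
      = sin ((real (n + 2) + 1 - 2 * of_int d) * t) * (gegenbauer2 (n + 2) t * sin t)" for t
    using gegenbauer2_Suc_Suc_mult_sin[of n t] by (simp add: algebra_simps)
  moreover have "(if 0 \<le> d - 1 then pi / 2 * (real n + 1 - 2 * of_int (d - 1)) else 0)
                   + (real n + 3) * (if d = 0 then pi / 2 else 0)
      = (if 0 \<le> d then pi / 2 * (real (n + 2) + 1 - 2 * of_int d) else 0)"
    by (auto simp: algebra_simps)
  ultimately show ?case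
    by simp
qed

lemma sum_atMost_mirror:
  fixes c :: "nat \<Rightarrow> real" and f :: "real \<Rightarrow> real"
  assumes "\<And>l. l \<le> i \<Longrightarrow> c (i - l) = c l"
  shows "(\<Sum>l\<le>i. c l * f (- (real i - 2 * real l))) = (\<Sum>l\<le>i. c l * f (real i - 2 * real l))"
proof -
  have "(\<Sum>l\<le>i. c l * f (real i - 2 * real l)) = (\<Sum>l\<le>i. c (i - l) * f (real i - 2 * real (i - l)))"
    unfolding atMost_atLeast0 by (subst sum.atLeastAtMost_rev) simp
  also have "\<dots> = (\<Sum>l\<le>i. c l * f (- (real i - 2 * real l)))"
    using assms by (intro sum.cong) (auto simp: of_nat_diff algebra_simps)
  finally show ?thesis ..
qed

lemma gegenbauer2_product_mult_sin_cube:
  "4 * sin t ^ 3 * gegenbauer2 i t * gegenbauer2 j t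
     = (\<Sum>l\<le>i. (real l + 1) * (real i - real l + 1)
           * ((real j + 3) * sin ((real i + real j + 1 - 2 * real l) * t)
              - (real j + 1) * sin ((real i + real j + 3 - 2 * real l) * t)))"
proof -
  define c where "c l = (real l + 1) * (real i - real l + 1)" for l
  define f where "f a = (real j + 3) * sin ((real j + 1 + a) * t) - (real j + 1) * sin ((real j + 3 + a) * t)"
    for a
  have product: "cos (a * t) * ((real j + 3) * sin ((real j + 1) * t) - (real j + 1) * sin ((real j + 3) * t))
      = (f a + f (- a)) / 2" for a
  proof -
    have sum_to_product: "sin ((b + a) * t) + sin ((b - a) * t) = 2 * cos (a * t) * sin (b * t)" for b
      unfolding distrib_right left_diff_distrib sin_add sin_diff by simp
    have "f a + f (- a) = (real j + 3) * (sin ((real j + 1 + a) * t) + sin ((real j + 1 - a) * t))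
        - (real j + 1) * (sin ((real j + 3 + a) * t) + sin ((real j + 3 - a) * t))"
      unfolding f_def by (simp add: algebra_simps)
    also have "\<dots> = 2 * (cos (a * t) * ((real j + 3) * sin ((real j + 1) * t) - (real j + 1) * sin ((real j + 3) * t)))"
      unfolding sum_to_product by (simp add: algebra_simps)
    finally show ?thesis
      by simp
  qed
  \<comment> \<open>the coefficients are symmetric under l \<mapsto> i - l, which negates i - 2 l\<close>
  have reflect: "(\<Sum>l\<le>i. c l * f (- (real i - 2 * real l))) = (\<Sum>l\<le>i. c l * f (real i - 2 * real l))"
    using sum_atMost_mirror[of i c f] by (simp add: c_def of_nat_diff)
  have "4 * sin t ^ 3 * gegenbauer2 i t * gegenbauer2 j t
      = gegenbauer2 i t * ((real j + 3) * sin ((real j + 1) * t) - (real j + 1) * sin ((real j + 3) * t))"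
    by (simp flip: gegenbauer2_mult_sin_cube)
  also have "\<dots> = (\<Sum>l\<le>i. c l * (cos ((real i - 2 * real l) * t)
      * ((real j + 3) * sin ((real j + 1) * t) - (real j + 1) * sin ((real j + 3) * t))))"
    unfolding gegenbauer2_def[of i] sum_distrib_right c_def by (simp add: mult.assoc)
  also have "\<dots> = (\<Sum>l\<le>i. c l * ((f (real i - 2 * real l) + f (- (real i - 2 * real l))) / 2))"
    unfolding product ..
  also have "\<dots> = ((\<Sum>l\<le>i. c l * f (real i - 2 * real l)) + (\<Sum>l\<le>i. c l * f (- (real i - 2 * real l)))) / 2"
    unfolding sum.distrib[symmetric] sum_divide_distrib by (intro sum.cong refl) (simp add: field_simps)
  also have "\<dots> = (\<Sum>l\<le>i. c l * f (real i - 2 * real l))"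
    unfolding reflect by simp
  finally show ?thesis
    unfolding c_def f_def by (simp add: algebra_simps)
qed

lemma sum_atMost_if_le:
  fixes i k :: nat
  shows "(\<Sum>l\<le>i. if k \<le> l then f l else 0) = (\<Sum>l=k..i. f l)"
  by (rule sum.mono_neutral_cong_right) auto

lemma triple_coefficient_telescope:
  assumes "k \<le> i"
  shows "(\<Sum>l=k..i. (real l + 1) * (real i - real l + 1) * (real j + 3) * (real i + real j + 1 - 2 * real l))
       - (\<Sum>l=Suc k..i. (real l + 1) * (real i - real l + 1) * (real j + 1) * (real i + real j + 3 - 2 * real l))
       = (real k + 1) * (real i - real k + 1) * (real j - real k + 1) * (real i + real j - real k + 3)"
  using assms
proof (induction k rule: inc_induct)
  case base
  then show ?case
    by (simp add: algebra_simps)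
next
  case (step k)
  then show ?case
    by (simp add: sum.atLeast_Suc_atMost[of k i] sum.atLeast_Suc_atMost[of "Suc k" i] algebra_simps)
qed

lemma triple_coefficient_sum:
  assumes "k \<le> i"
  shows "(\<Sum>l\<le>i. (real l + 1) * (real i - real l + 1) / 4
            * ((real j + 3) * (if k \<le> l then pi / 2 * (real i + real j + 1 - 2 * real l) else 0)
               - (real j + 1) * (if Suc k \<le> l then pi / 2 * (real i + real j + 3 - 2 * real l) else 0)))
         = pi / 8 * ((real k + 1) * (real i - real k + 1) * (real j - real k + 1) * (real i + real j - real k + 3))"
proof -
  define A where "A l = (real l + 1) * (real i - real l + 1) * (real j + 3) * (real i + real j + 1 - 2 * real l)" for l
  define B where "B l = (real l + 1) * (real i - real l + 1) * (real j + 1) * (real i + real j + 3 - 2 * real l)" for l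
  have "(real l + 1) * (real i - real l + 1) / 4
            * ((real j + 3) * (if k \<le> l then pi / 2 * (real i + real j + 1 - 2 * real l) else 0)
               - (real j + 1) * (if Suc k \<le> l then pi / 2 * (real i + real j + 3 - 2 * real l) else 0))
      = pi / 8 * ((if k \<le> l then A l else 0) - (if Suc k \<le> l then B l else 0))" for l
    unfolding A_def B_def by (auto simp: field_simps)
  then have "(\<Sum>l\<le>i. (real l + 1) * (real i - real l + 1) / 4
            * ((real j + 3) * (if k \<le> l then pi / 2 * (real i + real j + 1 - 2 * real l) else 0)
               - (real j + 1) * (if Suc k \<le> l then pi / 2 * (real i + real j + 3 - 2 * real l) else 0)))
      = pi / 8 * ((\<Sum>l\<le>i. if k \<le> l then A l else 0) - (\<Sum>l\<le>i. if Suc k \<le> l then B l else 0))"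
    by (simp only: sum_distrib_left[symmetric] sum_subtractf)
  also have "\<dots> = pi / 8 * ((\<Sum>l=k..i. A l) - (\<Sum>l=Suc k..i. B l))"
    unfolding sum_atMost_if_le ..
  finally show ?thesis
    unfolding A_def B_def triple_coefficient_telescope[OF assms] .
qed

lemma has_integral_gegenbauer2_triple:
  assumes "i \<le> j" "k \<le> i"
  shows "((\<lambda>t. gegenbauer2 i t * gegenbauer2 j t * gegenbauer2 (i + j - 2 * k) t * sin t ^ 4)
           has_integral pi / 8 * ((real k + 1) * (real i - real k + 1) * (real j - real k + 1)
                                  * (real i + real j - real k + 3))) {0..pi}"
proof -
  define p where "p = i + j - 2 * k"
  have int_p: "int p = int i + int j - 2 * int k"
    using assms unfolding p_def by simp
  then have "real p = real i + real j - 2 * real k"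
    by (metis of_int_of_nat_eq of_int_diff of_int_add of_int_mult of_int_numeral)
  then have freq: "real p + 1 - 2 * of_int (int l - int k) = real i + real j + 1 - 2 * real l"
                  "real p + 1 - 2 * of_int (int l - int k - 1) = real i + real j + 3 - 2 * real l" for l
    by simp_all
  have shifts: "(0 \<le> int l - int k) = (k \<le> l)" "(0 \<le> int l - int k - 1) = (Suc k \<le> l)" for l
    by auto
  define S where "S w t = sin (w * t) * (gegenbauer2 p t * sin t)" for w t
  have "(S (real i + real j + 1 - 2 * real l) has_integral (if k \<le> l then pi / 2 * (real i + real j + 1 - 2 * real l) else 0)) {0..pi}"
       "(S (real i + real j + 3 - 2 * real l) has_integral (if Suc k \<le> l then pi / 2 * (real i + real j + 3 - 2 * real l) else 0)) {0..pi}"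
    if "l \<le> i" for l
    using has_integral_sin_mult_gegenbauer2[of "int l - int k" p] has_integral_sin_mult_gegenbauer2[of "int l - int k - 1" p]
      that assms unfolding S_def freq shifts by (simp_all add: int_p)
  then have "((\<lambda>t. \<Sum>l\<le>i. (real l + 1) * (real i - real l + 1) / 4
                 * ((real j + 3) * S (real i + real j + 1 - 2 * real l) t - (real j + 1) * S (real i + real j + 3 - 2 * real l) t))
      has_integral (\<Sum>l\<le>i. (real l + 1) * (real i - real l + 1) / 4
            * ((real j + 3) * (if k \<le> l then pi / 2 * (real i + real j + 1 - 2 * real l) else 0)
               - (real j + 1) * (if Suc k \<le> l then pi / 2 * (real i + real j + 3 - 2 * real l) else 0)))) {0..pi}"
    by (intro has_integral_sum has_integral_mult_right has_integral_diff) auto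
  moreover have "gegenbauer2 i t * gegenbauer2 j t * gegenbauer2 p t * sin t ^ 4
      = (\<Sum>l\<le>i. (real l + 1) * (real i - real l + 1) / 4
           * ((real j + 3) * S (real i + real j + 1 - 2 * real l) t - (real j + 1) * S (real i + real j + 3 - 2 * real l) t))" for t
  proof -
    have "gegenbauer2 i t * gegenbauer2 j t * gegenbauer2 p t * sin t ^ 4
        = (4 * sin t ^ 3 * gegenbauer2 i t * gegenbauer2 j t) * (gegenbauer2 p t * sin t) / 4"
      by (simp add: power3_eq_cube power4_eq_xxxx)
    then show ?thesis
      unfolding gegenbauer2_product_mult_sin_cube sum_distrib_right sum_divide_distrib S_def
      by (simp add: field_simps)
  qed
  ultimately show ?thesis
    unfolding triple_coefficient_sum[OF assms(2)] p_def by simp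
qed

section \<open>The triple integrals\<close>

lemma Cbar_triple_closed_form:
  assumes "i \<le> j" "k \<le> i"
  shows "Cbar i j (i + j - 2 * k)
           = 2 * sqrt (2 / pi) * ((real k + 1) * (real i - real k + 1) * (real j - real k + 1) * (real i + real j - real k + 3))
             / sqrt ((real i + 1) * (real i + 3) * (real j + 1) * (real j + 3)
                     * (real (i + j - 2 * k) + 1) * (real (i + j - 2 * k) + 3))"
proof -
  define p where "p = i + j - 2 * k"
  define c where "c = sqrt (2 / pi)"
  define R where "R = (real k + 1) * (real i - real k + 1) * (real j - real k + 1) * (real i + real j - real k + 3)"
  define Q where "Q n = sqrt ((real n + 1) * (real n + 3))" for n
  have "((\<lambda>t. gegenbauer2 i t * gegenbauer2 j t * gegenbauer2 p t * sin t ^ 4) has_integral pi / 8 * R) {0..pi}"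
    using has_integral_gegenbauer2_triple[OF assms] unfolding p_def R_def .
  from has_integral_mult_right[OF this, of "(2 * c / Q i) * (2 * c / Q j) * (2 * c / Q p)"]
  have "((\<lambda>t. frake i t * frake j t * frake p t * sin t ^ 4)
          has_integral (2 * c / Q i) * (2 * c / Q j) * (2 * c / Q p) * (pi / 8 * R)) {0..pi}"
  proof (rule has_integral_spike_finite[rotated 2])
    fix t
    assume "t \<in> {0..pi} - {0, pi}"
    then have "0 < t" "t < pi"
      by auto
    then have "sin t \<noteq> 0"
      using sin_gt_zero by fastforce
    then show "frake i t * frake j t * frake p t * sin t ^ 4
        = (2 * c / Q i) * (2 * c / Q j) * (2 * c / Q p) * (gegenbauer2 i t * gegenbauer2 j t * gegenbauer2 p t * sin t ^ 4)"
      unfolding frake_eq_gegenbauer2[OF \<open>sin t \<noteq> 0\<close>] c_def Q_def by (simp only: mult_ac)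
  qed simp
  then have "Cbar i j p = (2 * c / Q i) * (2 * c / Q j) * (2 * c / Q p) * (pi / 8 * R)"
    unfolding Cbar_def by (rule integral_unique)
  also have "\<dots> = (c * c) * pi * (c * R) / (Q i * Q j * Q p)"
    by (simp add: field_simps Q_def)
  also have "\<dots> = 2 * c * R / (Q i * Q j * Q p)"
    unfolding c_def by simp
  also have "Q i * Q j * Q p = sqrt ((real i + 1) * (real i + 3) * (real j + 1) * (real j + 3) * (real p + 1) * (real p + 3))"
    unfolding Q_def by (simp add: real_sqrt_mult mult_ac)
  finally show ?thesis
    unfolding p_def c_def R_def by (simp add: mult_ac)
qed

lemma Cbar_commute_left: "Cbar i j m = Cbar j i m"
  unfolding Cbar_def by (simp only: mult_ac)

lemma Cbar_commute_right: "Cbar i j m = Cbar i m j"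
  unfolding Cbar_def by (simp only: mult_ac)

lemma sqrt_square_mult:
  fixes a b :: real
  assumes "0 \<le> a"
  shows "sqrt (a * a * b) = a * sqrt b"
  using assms by (simp add: real_sqrt_mult)

lemma Cbar_diagonal:
  fixes \<gamma> \<tau> :: nat
  assumes "\<tau> \<le> \<gamma>"
  shows "Cbar \<gamma> \<gamma> (2 * \<tau>) =
           2 * sqrt (2 / pi) * ((real \<tau> + 1)^2 * (real \<gamma> - real \<tau> + 1) * (real \<gamma> + real \<tau> + 3))
           / ((real \<gamma> + 1) * (real \<gamma> + 3) * sqrt (4 * real \<tau> * (real \<tau> + 2) + 3))"
proof -
  have "\<gamma> + \<gamma> - 2 * (\<gamma> - \<tau>) = 2 * \<tau>"
    using assms by simp
  moreover have "(real (\<gamma> - \<tau>) + 1) * (real \<gamma> - real (\<gamma> - \<tau>) + 1) * (real \<gamma> - real (\<gamma> - \<tau>) + 1)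
      * (real \<gamma> + real \<gamma> - real (\<gamma> - \<tau>) + 3)
      = (real \<tau> + 1)^2 * (real \<gamma> - real \<tau> + 1) * (real \<gamma> + real \<tau> + 3)"
    using assms by (simp add: of_nat_diff power2_eq_square algebra_simps)
  moreover have "sqrt ((real \<gamma> + 1) * (real \<gamma> + 3) * (real \<gamma> + 1) * (real \<gamma> + 3) * (real (2 * \<tau>) + 1) * (real (2 * \<tau>) + 3))
      = (real \<gamma> + 1) * (real \<gamma> + 3) * sqrt (4 * real \<tau> * (real \<tau> + 2) + 3)"
    using sqrt_square_mult[of "(real \<gamma> + 1) * (real \<gamma> + 3)" "4 * real \<tau> * (real \<tau> + 2) + 3"]
    by (simp add: algebra_simps)
  ultimately show ?thesis
    using Cbar_triple_closed_form[OF order_refl diff_le_self, of \<gamma> \<tau>] by (simp only:)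
qed

lemma Cbar_outer:
  fixes m \<tau> :: nat
  assumes "2 * \<tau> \<le> m"
  shows "Cbar m (2 * \<tau>) m =
           2 * sqrt (2 / pi) * ((real \<tau> + 1)^2 * (real m - real \<tau> + 1) * (real m + real \<tau> + 3))
           / ((real m + 1) * (real m + 3) * sqrt (4 * real \<tau> * (real \<tau> + 2) + 3))"
proof -
  have "Cbar m (2 * \<tau>) m = Cbar (2 * \<tau>) m (2 * \<tau> + m - 2 * \<tau>)"
    by (simp add: Cbar_commute_left)
  moreover have "(real \<tau> + 1) * (real (2 * \<tau>) - real \<tau> + 1) * (real m - real \<tau> + 1) * (real (2 * \<tau>) + real m - real \<tau> + 3)
      = (real \<tau> + 1)^2 * (real m - real \<tau> + 1) * (real m + real \<tau> + 3)"
    by (simp add: power2_eq_square algebra_simps)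
  moreover have "sqrt ((real (2 * \<tau>) + 1) * (real (2 * \<tau>) + 3) * (real m + 1) * (real m + 3) * (real (2 * \<tau> + m - 2 * \<tau>) + 1) * (real (2 * \<tau> + m - 2 * \<tau>) + 3))
      = (real m + 1) * (real m + 3) * sqrt (4 * real \<tau> * (real \<tau> + 2) + 3)"
    using sqrt_square_mult[of "(real m + 1) * (real m + 3)" "4 * real \<tau> * (real \<tau> + 2) + 3"]
    by (simp add: algebra_simps)
  ultimately show ?thesis
    using Cbar_triple_closed_form[OF assms, of \<tau>] by simp
qed

lemma Cbar_off_diagonal:
  fixes \<gamma> \<tau> m :: nat
  assumes "\<tau> \<le> \<gamma>" "\<gamma> \<le> m"
  shows "Cbar \<gamma> (2 * \<tau> + m - \<gamma>) m =
           2 * sqrt (2 / pi) * ((real \<tau> + 1) * (real \<gamma> - real \<tau> + 1) * (real m + real \<tau> + 3)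
                                * (- real \<gamma> + real m + real \<tau> + 1))
           / sqrt ((real \<gamma> + 1) * (real \<gamma> + 3) * (real m + 1) * (real m + 3)
                   * (- real \<gamma> + real m + 2 * real \<tau> + 1) * (- real \<gamma> + real m + 2 * real \<tau> + 3))"
proof -
  have "\<gamma> + m - 2 * (\<gamma> - \<tau>) = 2 * \<tau> + m - \<gamma>"
    using assms by simp
  then have "Cbar \<gamma> (2 * \<tau> + m - \<gamma>) m = Cbar \<gamma> m (\<gamma> + m - 2 * (\<gamma> - \<tau>))"
    by (metis Cbar_commute_right)
  moreover have "(real (\<gamma> - \<tau>) + 1) * (real \<gamma> - real (\<gamma> - \<tau>) + 1) * (real m - real (\<gamma> - \<tau>) + 1)
      * (real \<gamma> + real m - real (\<gamma> - \<tau>) + 3)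
      = (real \<tau> + 1) * (real \<gamma> - real \<tau> + 1) * (real m + real \<tau> + 3) * (- real \<gamma> + real m + real \<tau> + 1)"
    using assms by (simp add: of_nat_diff algebra_simps)
  moreover have "real (\<gamma> + m - 2 * (\<gamma> - \<tau>)) = - real \<gamma> + real m + 2 * real \<tau>"
    using assms by (simp add: of_nat_diff)
  ultimately show ?thesis
    using Cbar_triple_closed_form[OF assms(2) diff_le_self, of \<tau>] by (simp only: mult.assoc)
qed

theorem lemma5p9:
  fixes \<gamma> \<tau> m :: nat
  assumes "\<tau> \<le> \<gamma>" and "m \<ge> 2 * \<gamma> + 1"
  shows "(Cbar \<gamma> \<gamma> (2 * \<tau>) =
           2 * sqrt (2 / pi) * ((real \<tau> + 1)^2 * (real \<gamma> - real \<tau> + 1) * (real \<gamma> + real \<tau> + 3))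
           / ((real \<gamma> + 1) * (real \<gamma> + 3) * sqrt (4 * real \<tau> * (real \<tau> + 2) + 3))) \<and>
         (Cbar m (2 * \<tau>) m =
           2 * sqrt (2 / pi) * ((real \<tau> + 1)^2 * (real m - real \<tau> + 1) * (real m + real \<tau> + 3))
           / ((real m + 1) * (real m + 3) * sqrt (4 * real \<tau> * (real \<tau> + 2) + 3))) \<and>
         (Cbar \<gamma> (2 * \<tau> + m - \<gamma>) m =
           2 * sqrt (2 / pi) * ((real \<tau> + 1) * (real \<gamma> - real \<tau> + 1) * (real m + real \<tau> + 3)
                                * (- real \<gamma> + real m + real \<tau> + 1))
           / sqrt ((real \<gamma> + 1) * (real \<gamma> + 3) * (real m + 1) * (real m + 3)
                   * (- real \<gamma> + real m + 2 * real \<tau> + 1) * (- real \<gamma> + real m + 2 * real \<tau> + 3)))"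
  using Cbar_diagonal[OF assms(1)] Cbar_outer[of \<tau> m] Cbar_off_diagonal[OF assms(1), of m] assms
  by simp

end
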